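(* Let $G=(V,E)$ be a graph of maximum degree $\Delta$ and let $\mathscr{S}$ be any block system for $G$. Then $\mu^+(\mathscr{S})\le\Delta$. If in addition $G$ is $\Delta$-regular, then $\frac{\Delta}{2}\le\mu^+(\mathscr{S})\le\Delta$.
   Context: Potts configurations on $G$: $\sigma\in\Omega=[q]^V$, $q$ a positive integer. A block system for $G$ is a collection $\mathscr{S}$ of subsets of $V$ whose union is $V$. For $S\subseteq V$, $\partial S$ is the set of vertices of $V\setminus S$ with a neighbour in $S$. For $X\in\Omega$ and $c\in[q]^S$, $X^{(S,c)}$ equals $c$ on $S$ and $X$ off $S$; $\mu_{X,S}(c)$ is the number of monochromatic edges (edges with both endpoints the same colour) of $X^{(S,c)}$ incident with at least one vertex of $S$. A colour used by $c$ is free with respect to $X,S$ if it does not occur among $\{X(u):u\in\partial S\}$; $f(X,S,c)$ is the number of free colours used by $c$. $\mu^+_{X,S,f}=\max\{\mu_{X,S}(c)/(|S|-f): c\in[q]^S,\ f(X,S,c)=f\}$ (empty maximum $=0$), and $\mu^+(\mathscr{S})=\max_{S\in\mathscr{S}}\max_{X\in\Omega}\max_{f\in\{0,\dots,|S|-1\}}\mu^+_{X,S,f}$. *)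

theory Defs
  imports "HOL-Library.FuncSet" Complex_Main
begin

definition simple_graph :: "'a set \<Rightarrow> ('a \<Rightarrow> 'a \<Rightarrow> bool) \<Rightarrow> bool" where
  "simple_graph V E \<longleftrightarrow> finite V \<and> (\<forall>u v. E u v \<longrightarrow> u \<in> V \<and> v \<in> V)
     \<and> (\<forall>u v. E u v \<longrightarrow> E v u) \<and> (\<forall>v. \<not> E v v)"

definition degree :: "'a set \<Rightarrow> ('a \<Rightarrow> 'a \<Rightarrow> bool) \<Rightarrow> 'a \<Rightarrow> nat" where
  "degree V E v = card {u \<in> V. E v u}"

definition max_degree :: "'a set \<Rightarrow> ('a \<Rightarrow> 'a \<Rightarrow> bool) \<Rightarrow> nat" where
  "max_degree V E = Max (degree V E ` V)"

definition regular :: "'a set \<Rightarrow> ('a \<Rightarrow> 'a \<Rightarrow> bool) \<Rightarrow> nat \<Rightarrow> bool" where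
  "regular V E d \<longleftrightarrow> (\<forall>v \<in> V. degree V E v = d)"

definition configs :: "'a set \<Rightarrow> nat \<Rightarrow> ('a \<Rightarrow> nat) set" where
  "configs V q = V \<rightarrow>\<^sub>E {1..q}"

definition block_system :: "'a set \<Rightarrow> 'a set set \<Rightarrow> bool" where
  "block_system V SS \<longleftrightarrow> (\<forall>S \<in> SS. S \<subseteq> V) \<and> \<Union> SS = V"

definition boundary :: "'a set \<Rightarrow> ('a \<Rightarrow> 'a \<Rightarrow> bool) \<Rightarrow> 'a set \<Rightarrow> 'a set" where
  "boundary V E S = {v \<in> V - S. \<exists>u \<in> S. E u v}"

definition upd_conf :: "('a \<Rightarrow> nat) \<Rightarrow> 'a set \<Rightarrow> ('a \<Rightarrow> nat) \<Rightarrow> 'a \<Rightarrow> nat" where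
  "upd_conf X S c = (\<lambda>v. if v \<in> S then c v else X v)"

definition mu :: "('a \<Rightarrow> 'a \<Rightarrow> bool) \<Rightarrow> ('a \<Rightarrow> nat) \<Rightarrow> 'a set \<Rightarrow> ('a \<Rightarrow> nat) \<Rightarrow> nat" where
  "mu E X S c = card {{u, v} | u v. E u v \<and> upd_conf X S c u = upd_conf X S c v \<and> (u \<in> S \<or> v \<in> S)}"

definition free_count :: "'a set \<Rightarrow> ('a \<Rightarrow> 'a \<Rightarrow> bool) \<Rightarrow> ('a \<Rightarrow> nat) \<Rightarrow> 'a set \<Rightarrow> ('a \<Rightarrow> nat) \<Rightarrow> nat" where
  "free_count V E X S c = card (c ` S - X ` boundary V E S)"

text \<open>\<mu>^+_{X,S,f}; empty maximum is 0 (all values are nonnegative, so inserting 0 is harmless).\<close>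
definition mu_plus_XSf :: "'a set \<Rightarrow> ('a \<Rightarrow> 'a \<Rightarrow> bool) \<Rightarrow> nat \<Rightarrow> ('a \<Rightarrow> nat) \<Rightarrow> 'a set \<Rightarrow> nat \<Rightarrow> real" where
  "mu_plus_XSf V E q X S f = Max (insert 0
     {real (mu E X S c) / real (card S - f) | c. c \<in> S \<rightarrow>\<^sub>E {1..q} \<and> free_count V E X S c = f})"

definition mu_plus :: "'a set \<Rightarrow> ('a \<Rightarrow> 'a \<Rightarrow> bool) \<Rightarrow> nat \<Rightarrow> 'a set set \<Rightarrow> real" where
  "mu_plus V E q SS = Max (insert 0
     (\<Union>S \<in> SS. \<Union>X \<in> configs V q. (\<lambda>f. mu_plus_XSf V E q X S f) ` {0..<card S}))"

end

theory Submission
  imports Defs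
begin

text \<open>Upper bound: choose one vertex of S for each free colour used by c, forming a set R with
  |R| = f. A monochromatic edge at a vertex of R can end neither on the boundary (its colour is
  free) nor at another vertex of R (the colours on R are distinct), so every monochromatic edge
  meets S - R, and there are at most \<Delta> |S - R| = \<Delta> (|S| - f) of them.
  Lower bound for \<Delta>-regular graphs: colour everything with one colour. All edges meeting a
  block S are then monochromatic, by the handshake lemma there are at least \<Delta> |S| / 2 of them,
  and at most one colour is free; if it is, S has no boundary and so contains a vertex together
  with its \<Delta> \<ge> 1 neighbours, whence f < |S|.\<close>

definition edges_meeting :: "('a \<Rightarrow> 'a \<Rightarrow> bool) \<Rightarrow> 'a set \<Rightarrow> 'a set set" where
  "edges_meeting E T = {{u, v} | u v. E u v \<and> u \<in> T}"

lemma simple_graph_edgeD: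
  assumes "simple_graph V E" "E u v"
  shows "u \<in> V" "v \<in> V" "E v u" "u \<noteq> v"
  using assms unfolding simple_graph_def by metis+

lemma degree_le_max_degree:
  assumes "simple_graph V E" "w \<in> V"
  shows "degree V E w \<le> max_degree V E"
  using assms unfolding max_degree_def simple_graph_def by (intro Max_ge) auto

lemma edges_meeting_eq:
  assumes "simple_graph V E"
  shows "edges_meeting E T = {{u, v} | u v. E u v \<and> (u \<in> T \<or> v \<in> T)}"
  unfolding edges_meeting_def using simple_graph_edgeD(3)[OF assms]
  by (auto simp: insert_commute)

lemma finite_edges_meeting:
  assumes sg: "simple_graph V E"
  shows "finite (edges_meeting E T)"
proof -
  have "edges_meeting E T \<subseteq> (\<lambda>(u, v). {u, v}) ` (V \<times> V)"
    unfolding edges_meeting_def using simple_graph_edgeD(1,2)[OF sg] by blast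
  moreover have "finite V" using sg unfolding simple_graph_def by auto
  ultimately show ?thesis using finite_subset by blast
qed

lemma card_edges_meeting_le:
  assumes sg: "simple_graph V E" and TV: "T \<subseteq> V"
  shows "card (edges_meeting E T) \<le> max_degree V E * card T"
proof -
  have finV: "finite V" using sg unfolding simple_graph_def by auto
  then have finT: "finite T" using TV finite_subset by auto
  have "edges_meeting E T = (\<Union>w\<in>T. (\<lambda>v. {w, v}) ` {v \<in> V. E w v})"
    unfolding edges_meeting_def using simple_graph_edgeD(2)[OF sg] by blast
  then have "card (edges_meeting E T) \<le> (\<Sum>w\<in>T. card ((\<lambda>v. {w, v}) ` {v \<in> V. E w v}))"
    using card_UN_le[OF finT] by simp
  also have "\<dots> \<le> (\<Sum>w\<in>T. max_degree V E)"
  proof (rule sum_mono)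
    fix w assume "w \<in> T"
    have "card ((\<lambda>v. {w, v}) ` {v \<in> V. E w v}) \<le> degree V E w"
      unfolding degree_def by (rule card_image_le) (use finV in auto)
    also have "\<dots> \<le> max_degree V E" using degree_le_max_degree[OF sg] \<open>w \<in> T\<close> TV by auto
    finally show "card ((\<lambda>v. {w, v}) ` {v \<in> V. E w v}) \<le> max_degree V E" .
  qed
  finally show ?thesis by (simp add: mult.commute)
qed

lemma sum_degree_le_twice_card_edges_meeting:
  assumes sg: "simple_graph V E" and TV: "T \<subseteq> V"
  shows "(\<Sum>w\<in>T. degree V E w) \<le> 2 * card (edges_meeting E T)"
proof -
  define M where "M = edges_meeting E T"
  define P where "P = Sigma T (\<lambda>w. {v \<in> V. E w v})"
  have finV: "finite V" using sg unfolding simple_graph_def by auto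
  then have finT: "finite T" using TV finite_subset by auto
  have finM: "finite M" unfolding M_def by (rule finite_edges_meeting[OF sg])
  have "(\<Sum>w\<in>T. degree V E w) = card P"
    unfolding P_def degree_def by (rule card_SigmaI[symmetric]) (use finT finV in auto)
  also have "P = (\<Union>e\<in>M. {p \<in> P. {fst p, snd p} = e})"
    unfolding M_def edges_meeting_def P_def by fastforce
  also have "card \<dots> \<le> (\<Sum>e\<in>M. card {p \<in> P. {fst p, snd p} = e})"
    by (rule card_UN_le[OF finM])
  also have "\<dots> \<le> (\<Sum>e\<in>M. 2)"
  proof (rule sum_mono)
    fix e assume "e \<in> M"
    then obtain a b where e: "e = {a, b}" unfolding M_def edges_meeting_def by blast
    have "{p \<in> P. {fst p, snd p} = e} \<subseteq> {(a, b), (b, a)}"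
      using e by (auto simp: doubleton_eq_iff)
    then have "card {p \<in> P. {fst p, snd p} = e} \<le> card {(a, b), (b, a)}"
      by (rule card_mono[rotated]) simp
    also have "\<dots> \<le> 2" by (rule card_insert_le_m1) simp_all
    finally show "card {p \<in> P. {fst p, snd p} = e} \<le> 2" .
  qed
  finally show ?thesis unfolding M_def by simp
qed

lemma monochromatic_edges_meet_nonfree_part:
  assumes sg: "simple_graph V E"
    and RS: "R \<subseteq> S" and inj: "inj_on c R"
    and free: "c ` R \<inter> X ` boundary V E S = {}"
  shows "{{u, v} | u v. E u v \<and> upd_conf X S c u = upd_conf X S c v \<and> (u \<in> S \<or> v \<in> S)}
           \<subseteq> edges_meeting E (S - R)"
proof -
  let ?Y = "upd_conf X S c"
  have partner: "b \<in> S - R" if ab: "E a b" "?Y a = ?Y b" "a \<in> R" for a b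
  proof (rule ccontr)
    assume b: "b \<notin> S - R"
    show False
    proof (cases "b \<in> S")
      case True
      then have "b \<in> R" "c a = c b" using ab b RS by (auto simp: upd_conf_def)
      then show False using inj_onD[OF inj] ab simple_graph_edgeD(4)[OF sg] by metis
    next
      case False
      then have "b \<in> boundary V E S" "c a = X b"
        using ab RS simple_graph_edgeD(2)[OF sg] by (auto simp: boundary_def upd_conf_def)
      then show False using free \<open>a \<in> R\<close> by blast
    qed
  qed
  show ?thesis
  proof
    fix e
    assume "e \<in> {{u, v} | u v. E u v \<and> ?Y u = ?Y v \<and> (u \<in> S \<or> v \<in> S)}"
    then obtain u v where e: "e = {u, v}" "E u v" "?Y u = ?Y v" "u \<in> S \<or> v \<in> S" by blast
    have "u \<in> S - R \<or> v \<in> S - R"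
      using e partner[of u v] partner[of v u] simple_graph_edgeD(3)[OF sg] by auto
    then show "e \<in> edges_meeting E (S - R)"
      using e edges_meeting_eq[OF sg] by auto
  qed
qed

lemma mu_le_max_degree_mult:
  assumes sg: "simple_graph V E" and SV: "S \<subseteq> V"
  shows "mu E X S c \<le> max_degree V E * (card S - free_count V E X S c)"
proof -
  define F where "F = c ` S - X ` boundary V E S"
  define R where "R = inv_into S c ` F"
  have finS: "finite S" using sg SV finite_subset unfolding simple_graph_def by auto
  have FS: "F \<subseteq> c ` S" unfolding F_def by auto
  have RS: "R \<subseteq> S" unfolding R_def using FS by (auto intro: inv_into_into)
  have cR: "c ` R = F" unfolding R_def using FS by (force simp: image_image f_inv_into_f)
  have cardR: "card R = card F"
    unfolding R_def by (rule card_image) (rule inj_on_inv_into[OF FS])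
  have "inj_on c R"
    using finite_subset[OF RS finS] cardR cR by (metis eq_card_imp_inj_on)
  moreover have "c ` R \<inter> X ` boundary V E S = {}" using cR F_def by auto
  ultimately have "mu E X S c \<le> card (edges_meeting E (S - R))"
    unfolding mu_def
    using monochromatic_edges_meet_nonfree_part[OF sg RS] finite_edges_meeting[OF sg]
    by (intro card_mono) auto
  also have "\<dots> \<le> max_degree V E * card (S - R)"
    by (rule card_edges_meeting_le[OF sg]) (use SV in auto)
  also have "card (S - R) = card S - free_count V E X S c"
    using card_Diff_subset[OF finite_subset[OF RS finS] RS] cardR
    unfolding free_count_def F_def by simp
  finally show ?thesis .
qed

lemma mu_constant_colouring:
  assumes sg: "simple_graph V E" and const: "\<forall>v\<in>V. upd_conf X S c v = k"
  shows "mu E X S c = card (edges_meeting E S)"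
proof -
  have "{{u, v} | u v. E u v \<and> upd_conf X S c u = upd_conf X S c v \<and> (u \<in> S \<or> v \<in> S)}
          = edges_meeting E S"
    unfolding edges_meeting_eq[OF sg] using const simple_graph_edgeD(1,2)[OF sg] by metis
  then show ?thesis unfolding mu_def by simp
qed

lemma free_count_constant_colouring_lt_card:
  assumes sg: "simple_graph V E" and reg: "regular V E D" and "D > 0"
    and SV: "S \<subseteq> V" and "w \<in> S"
  shows "free_count V E (\<lambda>v\<in>V. k) S (\<lambda>v\<in>S. k) < card S"
proof -
  let ?X = "\<lambda>v\<in>V. k" and ?c = "\<lambda>v\<in>S. k"
  have finS: "finite S" using sg SV finite_subset unfolding simple_graph_def by auto
  have cS: "?c ` S = {k}" using \<open>w \<in> S\<close> by auto
  show ?thesis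
  proof (cases "boundary V E S = {}")
    case False
    then have "k \<in> ?X ` boundary V E S" by (force simp: boundary_def)
    then have "free_count V E ?X S ?c = 0" unfolding free_count_def cS by simp
    then show ?thesis using finS \<open>w \<in> S\<close> card_gt_0_iff by auto
  next
    case True
    have "card {u \<in> V. E w u} > 0"
      using reg \<open>D > 0\<close> \<open>w \<in> S\<close> SV unfolding regular_def degree_def by auto
    then obtain u where u: "u \<in> V" "E w u" by (metis (no_types, lifting) card.empty empty_Collect_eq less_irrefl)
    then have "u \<in> S" "u \<noteq> w"
      using True \<open>w \<in> S\<close> simple_graph_edgeD(4)[OF sg] unfolding boundary_def by blast+
    then have "2 \<le> card S"
      using card_mono[OF finS, of "{w, u}"] \<open>w \<in> S\<close> by auto
    moreover have "free_count V E ?X S ?c \<le> 1"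
      using card_mono[of "?c ` S" "?c ` S - ?X ` boundary V E S"] cS
      unfolding free_count_def by auto
    ultimately show ?thesis by linarith
  qed
qed

lemma half_degree_le_mu_ratio_constant_colouring:
  assumes sg: "simple_graph V E" and reg: "regular V E D"
    and SV: "S \<subseteq> V" and f: "f < card S"
  shows "real D / 2 \<le> real (mu E (\<lambda>v\<in>V. k) S (\<lambda>v\<in>S. k)) / real (card S - f)"
proof -
  have "D * card S = (\<Sum>w\<in>S. degree V E w)"
    using reg SV unfolding regular_def by (simp add: subset_iff)
  also have "\<dots> \<le> 2 * mu E (\<lambda>v\<in>V. k) S (\<lambda>v\<in>S. k)"
    using sum_degree_le_twice_card_edges_meeting[OF sg SV]
      mu_constant_colouring[OF sg, of "\<lambda>v\<in>V. k" S "\<lambda>v\<in>S. k" k]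
    by (simp add: upd_conf_def)
  finally have "real D * real (card S) \<le> 2 * real (mu E (\<lambda>v\<in>V. k) S (\<lambda>v\<in>S. k))"
    by (metis of_nat_le_iff of_nat_mult of_nat_numeral)
  moreover have "real D * real (card S - f) \<le> real D * real (card S)"
    by (intro mult_left_mono) auto
  ultimately show ?thesis using f by (simp add: field_simps del: of_nat_diff)
qed

lemma finite_mu_ratios:
  assumes "finite S"
  shows "finite {real (mu E X S c) / real (card S - f) | c. c \<in> S \<rightarrow>\<^sub>E {1..q} \<and> free_count V E X S c = f}"
proof -
  have "finite ((\<lambda>c. real (mu E X S c) / real (card S - f)) ` (S \<rightarrow>\<^sub>E {1..q}))"
    using assms by (intro finite_imageI finite_PiE) auto
  then show ?thesis by (rule finite_subset[rotated]) blast
qed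

lemma mu_plus_XSf_le_max_degree:
  assumes sg: "simple_graph V E" and SV: "S \<subseteq> V" and f: "f < card S"
  shows "mu_plus_XSf V E q X S f \<le> real (max_degree V E)"
proof -
  have finS: "finite S" using sg SV finite_subset unfolding simple_graph_def by blast
  have "real (mu E X S c) / real (card S - f) \<le> real (max_degree V E)"
    if "free_count V E X S c = f" for c
  proof -
    have "mu E X S c \<le> max_degree V E * (card S - f)"
      using mu_le_max_degree_mult[OF sg SV, of X c] that by simp
    then have "real (mu E X S c) \<le> real (max_degree V E) * real (card S - f)"
      by (metis of_nat_le_iff of_nat_mult)
    then show ?thesis using f by (simp add: divide_le_eq)
  qed
  then show ?thesis
    unfolding mu_plus_XSf_def using finite_mu_ratios[OF finS] by (subst Max_le_iff) auto
qed

lemma mu_ratio_le_mu_plus_XSf: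
  assumes "finite S" and "c \<in> S \<rightarrow>\<^sub>E {1..q}"
  shows "real (mu E X S c) / real (card S - free_count V E X S c)
           \<le> mu_plus_XSf V E q X S (free_count V E X S c)"
  unfolding mu_plus_XSf_def using assms finite_mu_ratios[OF assms(1)] by (intro Max_ge) auto

lemma finite_mu_plus_candidates:
  assumes sg: "simple_graph V E" and bs: "block_system V SS"
  shows "finite (\<Union>S \<in> SS. \<Union>X \<in> configs V q. (\<lambda>f. mu_plus_XSf V E q X S f) ` {0..<card S})"
proof -
  have finV: "finite V" using sg unfolding simple_graph_def by auto
  have "SS \<subseteq> Pow V" using bs unfolding block_system_def by auto
  then have "finite SS" using finV by (meson finite_Pow_iff finite_subset)
  moreover have "finite (configs V q)" unfolding configs_def using finV by (intro finite_PiE) auto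
  ultimately show ?thesis by auto
qed

lemma mu_plus_XSf_le_mu_plus:
  assumes "simple_graph V E" and "block_system V SS"
    and "S \<in> SS" and "X \<in> configs V q" and "f < card S"
  shows "mu_plus_XSf V E q X S f \<le> mu_plus V E q SS"
proof -
  have "mu_plus_XSf V E q X S f
          \<in> (\<Union>S \<in> SS. \<Union>X \<in> configs V q. (\<lambda>f. mu_plus_XSf V E q X S f) ` {0..<card S})"
    using assms(5) by (intro UN_I[OF assms(3)] UN_I[OF assms(4)] imageI) auto
  then show ?thesis
    unfolding mu_plus_def using finite_mu_plus_candidates[OF assms(1,2)] by (intro Max_ge) auto
qed

lemma mu_plus_nonneg:
  assumes "simple_graph V E" and "block_system V SS"
  shows "0 \<le> mu_plus V E q SS"
  unfolding mu_plus_def using finite_mu_plus_candidates[OF assms] by (intro Max_ge) auto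

lemma mu_plus_le_max_degree:
  assumes sg: "simple_graph V E" and bs: "block_system V SS"
  shows "mu_plus V E q SS \<le> real (max_degree V E)"
  unfolding mu_plus_def using finite_mu_plus_candidates[OF assms] bs
    mu_plus_XSf_le_max_degree[OF sg]
  by (subst Max_le_iff) (auto simp: block_system_def)

theorem proposition2p4:
  fixes V :: "'a set" and E :: "'a \<Rightarrow> 'a \<Rightarrow> bool" and q :: nat and SS :: "'a set set"
  assumes "simple_graph V E" and "V \<noteq> {}" and "q \<ge> 1"
    and "block_system V SS"
  shows "mu_plus V E q SS \<le> real (max_degree V E) \<and>
         (regular V E (max_degree V E) \<longrightarrow>
           real (max_degree V E) / 2 \<le> mu_plus V E q SS)"
proof (intro conjI impI)
  show "mu_plus V E q SS \<le> real (max_degree V E)"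
    using mu_plus_le_max_degree[OF assms(1,4)] .
  let ?D = "max_degree V E"
  assume reg: "regular V E ?D"
  show "real ?D / 2 \<le> mu_plus V E q SS"
  proof (cases "?D = 0")
    case True
    then show ?thesis using mu_plus_nonneg[OF assms(1,4)] by simp
  next
    case False
    obtain S w where S: "S \<in> SS" "w \<in> S" "S \<subseteq> V"
      using assms(2,4) unfolding block_system_def by blast
    let ?X = "\<lambda>v\<in>V. 1" and ?c = "\<lambda>v\<in>S. 1" and ?f = "free_count V E (\<lambda>v\<in>V. 1) S (\<lambda>v\<in>S. 1)"
    have finS: "finite S" using assms(1) S(3) finite_subset unfolding simple_graph_def by blast
    have f: "?f < card S"
      using free_count_constant_colouring_lt_card[OF assms(1) reg _ S(3,2)] False by simp
    have "real ?D / 2 \<le> real (mu E ?X S ?c) / real (card S - ?f)"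
      by (rule half_degree_le_mu_ratio_constant_colouring[OF assms(1) reg S(3) f])
    also have "\<dots> \<le> mu_plus_XSf V E q ?X S ?f"
      using assms(3) by (intro mu_ratio_le_mu_plus_XSf[OF finS]) auto
    also have "\<dots> \<le> mu_plus V E q SS"
      using assms(3) f by (intro mu_plus_XSf_le_mu_plus[OF assms(1,4) S(1)]) (auto simp: configs_def)
    finally show ?thesis .
  qed
qed

end
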